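(* Let $0\le\theta_1<\theta_2\le\frac{\pi}{2}$ and $d=\lceil\frac{1}{\theta_2-\theta_1}\rceil$. Define the grid point $p=P_1(\theta_1,\theta_2)$ by: (i) if $\theta_2-\theta_1>\frac{\pi}{4}$: $p=(1,1)$; (ii) if $\arctan(\frac12)<\theta_2-\theta_1\le\frac{\pi}{4}$: $p=(1,2)$ if $\theta_1\ge\frac{\pi}{4}$; $p=(1,1)$ if $\arctan(\frac12)\le\theta_1<\frac{\pi}{4}$; $p=(2,1)$ if $\theta_1<\arctan(\frac12)$; (iii) if $\theta_2-\theta_1\le\arctan(\frac12)$: $p=(d,\lfloor\tan(\theta_1)\,d+1\rfloor)$ if $\theta_2\le\frac{\pi}{4}$; $p=(1,1)$ if $\theta_1<\frac{\pi}{4}<\theta_2$; $p=(\lfloor\tan(\frac{\pi}{2}-\theta_2)\,d+1\rfloor,d)$ if $\theta_1\ge\frac{\pi}{4}$. Then the segment $e$ from $(0,0)$ to $p$ satisfies $\theta_1<slope(e)<\theta_2$, and, writing $p=(x,y)$, we have $\max(x,y)\le\frac{\pi}{2}\cdot\frac{1}{\theta_2-\theta_1}$.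
   Context: The slope of a segment from $(0,0)$ to a point $p\neq(0,0)$ is the angle (mod $2\pi$) of the counter-clockwise rotation taking the positive $x$-axis onto the half-line from the origin through $p$. *)

theory Defs
  imports "HOL-Analysis.Analysis"
begin

definition slope :: "real \<times> real \<Rightarrow> real" where
  "slope p = (let a = Arg (Complex (fst p) (snd p)) in if a < 0 then a + 2 * pi else a)"

definition P1 :: "real \<Rightarrow> real \<Rightarrow> int \<times> int" where
  "P1 t1 t2 = (let d = \<lceil>1 / (t2 - t1)\<rceil> in
     if t2 - t1 > pi / 4 then (1, 1)
     else if arctan (1/2) < t2 - t1 then
       (if t1 \<ge> pi / 4 then (1, 2)
        else if arctan (1/2) \<le> t1 then (1, 1)
        else (2, 1))
     else
       (if t2 \<le> pi / 4 then (d, \<lfloor>tan t1 * d + 1\<rfloor>)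
        else if t1 < pi / 4 then (1, 1)
        else (\<lfloor>tan (pi / 2 - t2) * d + 1\<rfloor>, d)))"

end

theory Submission
  imports Defs
begin

text \<open>For a wide window one of the points (1,1), (2,1), (1,2) of slopes pi/4, arctan(1/2) and
  pi/2 - arctan(1/2) lies inside it. For a narrow window (t1, t2) below the diagonal take
  d = \<lceil>1/(t2 - t1)\<rceil>: the values y/d are 1/d apart, and since tan grows at least as fast as
  its argument on [0, pi/2) some y/d falls strictly between tan t1 and tan t2; d itself is at
  most (pi/2)/(t2 - t1) because t2 - t1 < pi/2 - 1. Windows above the diagonal are reduced to
  this case by reflecting in it.\<close>

definition admissible_point :: "real \<Rightarrow> real \<Rightarrow> int \<times> int \<Rightarrow> bool" where
  "admissible_point t1 t2 p \<longleftrightarrow> 0 < fst p \<and> 0 < snd p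
     \<and> t1 < slope (real_of_int (fst p), real_of_int (snd p))
     \<and> slope (real_of_int (fst p), real_of_int (snd p)) < t2
     \<and> real_of_int (max (fst p) (snd p)) \<le> pi / 2 * (1 / (t2 - t1))"

lemma diff_less_tan_diff:
  fixes x y :: real
  assumes "0 \<le> y" "y < x" "x < pi/2"
  shows "x - y < tan x - tan y"
proof -
  have "DERIV tan z :> inverse ((cos z)\<^sup>2)" if "y \<le> z" "z \<le> x" for z
  proof -
    have "0 < cos z"
      using that assms by (intro cos_gt_zero_pi) auto
    then show ?thesis
      by (intro DERIV_tan) simp
  qed
  from MVT2[OF \<open>y < x\<close> this]
  obtain z where z: "y < z" "z < x" and tan_diff: "tan x - tan y = (x - y) * inverse ((cos z)\<^sup>2)"
    by auto
  have "0 < cos z" "0 < sin z"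
    using z assms by (auto intro: cos_gt_zero_pi sin_gt_zero)
  then have "(cos z)\<^sup>2 < 1" "0 < (cos z)\<^sup>2"
    using sin_cos_squared_add[of z] zero_less_power[of "sin z" 2] by (linarith, simp)
  then have "1 < inverse ((cos z)\<^sup>2)"
    by (simp add: one_less_inverse)
  then show ?thesis
    unfolding tan_diff using z by simp
qed

lemma arctan_half_pos: "0 < arctan (1/2 :: real)"
  by (simp add: arctan_less_iff[of 0, simplified])

lemma arctan_half_less_half: "arctan (1/2 :: real) < 1/2"
  using diff_less_tan_diff[of 0 "arctan (1/2)"] arctan_half_pos arctan_ubound
  by (simp add: tan_arctan)

lemma pi_quarter_less_two_arctan_half: "pi/4 < 2 * arctan (1/2 :: real)"
proof -
  have "2 * arctan (1/2 :: real) = arctan (4/3)"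
    using arctan_double[of "1/2 :: real"] by (simp add: power2_eq_square)
  moreover have "pi/4 < arctan (4/3 :: real)"
    using arctan_less_iff[of 1 "4/3"] arctan_one by simp
  ultimately show ?thesis by linarith
qed

lemma slope_eq_arctan:
  assumes "0 < x" "0 < y"
  shows "slope (x, y) = arctan (y / x)"
proof -
  have "Arg (Complex x y) = arctan (y / x)"
    using arg_conv_arctan[of "Complex x y"] assms by simp
  moreover have "0 < arctan (y / x)"
    using assms by (simp add: arctan_less_iff[of 0, simplified])
  ultimately show ?thesis
    unfolding slope_def Let_def by simp
qed

lemma slope_swap:
  assumes "0 < x" "0 < y"
  shows "slope (y, x) = pi/2 - slope (x, y)"
  using assms arctan_inverse[of "y / x"] by (simp add: slope_eq_arctan)

lemma admissible_pointI:
  assumes "0 < x" "0 < y" "t1 < arctan (real_of_int y / x)" "arctan (real_of_int y / x) < t2"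
    and "real_of_int (max x y) \<le> pi / 2 * (1 / (t2 - t1))"
  shows "admissible_point t1 t2 (x, y)"
  using assms by (simp add: admissible_point_def slope_eq_arctan)

lemma admissible_point_swap:
  assumes "admissible_point (pi/2 - t2) (pi/2 - t1) (x, y)"
  shows "admissible_point t1 t2 (y, x)"
  using assms slope_swap[of "real_of_int x" "real_of_int y"]
  by (auto simp: admissible_point_def max.commute)

lemma admissible_point_one_one:
  assumes "t1 < pi/4" "pi/4 < t2" "t2 - t1 \<le> pi/2"
  shows "admissible_point t1 t2 (1, 1)"
  using assms by (intro admissible_pointI) (simp_all add: arctan_one field_simps)

lemma admissible_point_two_one:
  assumes "t1 < arctan (1/2)" "arctan (1/2) < t2" "t2 - t1 \<le> pi/4"
  shows "admissible_point t1 t2 (2, 1)"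
  using assms by (intro admissible_pointI) (simp_all add: field_simps)

lemma admissible_point_one_two:
  assumes "t1 < pi/2 - arctan (1/2)" "pi/2 - arctan (1/2) < t2" "t2 - t1 \<le> pi/4"
  shows "admissible_point t1 t2 (1, 2)"
  using assms arctan_inverse[of "1/2 :: real"] by (intro admissible_pointI) (simp_all add: field_simps)

lemma floor_tan_grid_between:
  fixes s1 s2 d :: real
  assumes "0 \<le> s1" "s1 < s2" "s2 < pi/2" "0 < d" "1 / (s2 - s1) \<le> d"
  shows "tan s1 < (\<lfloor>tan s1 * d\<rfloor> + 1) / d" and "(\<lfloor>tan s1 * d\<rfloor> + 1) / d < tan s2"
proof -
  have "1 / d \<le> s2 - s1"
    using assms by (simp add: field_simps)
  have "tan s1 * d < \<lfloor>tan s1 * d\<rfloor> + 1" "\<lfloor>tan s1 * d\<rfloor> + 1 \<le> tan s1 * d + 1"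
    by linarith+
  then have "tan s1 < (\<lfloor>tan s1 * d\<rfloor> + 1) / d" "(\<lfloor>tan s1 * d\<rfloor> + 1) / d \<le> tan s1 + 1 / d"
    using \<open>0 < d\<close> by (simp_all add: field_simps)
  moreover have "tan s1 + (s2 - s1) < tan s2"
    using diff_less_tan_diff[of s1 s2] assms by simp
  ultimately show "tan s1 < (\<lfloor>tan s1 * d\<rfloor> + 1) / d" "(\<lfloor>tan s1 * d\<rfloor> + 1) / d < tan s2"
    using \<open>1 / d \<le> s2 - s1\<close> by linarith+
qed

lemma ceiling_inverse_le:
  fixes \<delta> :: real
  assumes "0 < \<delta>" "\<delta> \<le> pi/2 - 1"
  shows "real_of_int \<lceil>1 / \<delta>\<rceil> \<le> pi/2 * (1 / \<delta>)"
proof -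
  have "\<delta> * (2 + 2 * \<delta>) \<le> \<delta> * pi"
    using assms by (intro mult_left_mono) simp_all
  then have "1 / \<delta> + 1 \<le> pi/2 * (1 / \<delta>)"
    using assms by (simp add: field_simps)
  then show ?thesis by linarith
qed

lemma admissible_point_grid:
  assumes "0 \<le> t1" "t1 < t2" "t2 \<le> pi/4" "t2 - t1 \<le> arctan (1/2)"
  shows "admissible_point t1 t2 (\<lceil>1 / (t2 - t1)\<rceil>, \<lfloor>tan t1 * \<lceil>1 / (t2 - t1)\<rceil>\<rfloor> + 1)"
proof -
  define d where "d = \<lceil>1 / (t2 - t1)\<rceil>"
  define y where "y = \<lfloor>tan t1 * d\<rfloor> + 1"
  have "t2 - t1 < 1/2"
    using assms arctan_half_less_half by linarith
  then have "2 < 1 / (t2 - t1)"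
    using assms by (simp add: field_simps)
  then have "0 < real_of_int d" "1 / (t2 - t1) \<le> d"
    unfolding d_def by linarith+
  then have between: "tan t1 < y / d" "y / d < tan t2"
    unfolding y_def using floor_tan_grid_between[of t1 t2 d] assms by simp_all
  have "0 \<le> tan t1" "tan t2 \<le> 1"
    using assms tan_mono_le[of t2 "pi/4"] by (simp_all add: tan_pos_pi2_le tan_45)
  then have "0 \<le> tan t1 * d" "tan t2 * d \<le> d"
    using \<open>0 < real_of_int d\<close> by (simp_all add: mult_left_le_one_le)
  moreover have "tan t1 * d < y" "y < tan t2 * d"
    using between \<open>0 < real_of_int d\<close> by (simp_all add: field_simps)
  ultimately have "0 < y" "y < d"
    by linarith+
  moreover have "arctan (tan t1) = t1" "arctan (tan t2) = t2"
    using assms pi_gt_zero by (intro arctan_tan; linarith)+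
  then have "t1 < arctan (y / d)" "arctan (y / d) < t2"
    using between arctan_less_iff by metis+
  moreover have "real_of_int d \<le> pi/2 * (1 / (t2 - t1))"
    unfolding d_def using \<open>t2 - t1 < 1/2\<close> assms pi_gt3 by (intro ceiling_inverse_le) simp_all
  ultimately show ?thesis
    unfolding d_def[symmetric] y_def[symmetric] by (intro admissible_pointI) simp_all
qed

lemma admissible_point_grid_reflected:
  assumes "pi/4 \<le> t1" "t1 < t2" "t2 \<le> pi/2" "t2 - t1 \<le> arctan (1/2)"
  shows "admissible_point t1 t2 (\<lfloor>tan (pi/2 - t2) * \<lceil>1 / (t2 - t1)\<rceil>\<rfloor> + 1, \<lceil>1 / (t2 - t1)\<rceil>)"
proof -
  have "admissible_point (pi/2 - t2) (pi/2 - t1)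
      (\<lceil>1 / (t2 - t1)\<rceil>, \<lfloor>tan (pi/2 - t2) * \<lceil>1 / (t2 - t1)\<rceil>\<rfloor> + 1)"
    using admissible_point_grid[of "pi/2 - t2" "pi/2 - t1"] assms by simp
  then show ?thesis
    by (rule admissible_point_swap)
qed

theorem lemma3:
  fixes t1 t2 :: real
  assumes "0 \<le> t1" and "t1 < t2" and "t2 \<le> pi / 2"
  shows "t1 < slope (real_of_int (fst (P1 t1 t2)), real_of_int (snd (P1 t1 t2)))
       \<and> slope (real_of_int (fst (P1 t1 t2)), real_of_int (snd (P1 t1 t2))) < t2
       \<and> real_of_int (max (fst (P1 t1 t2)) (snd (P1 t1 t2))) \<le> pi / 2 * (1 / (t2 - t1))"
proof -
  have "admissible_point t1 t2 (P1 t1 t2)"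
    unfolding P1_def Let_def
    using assms arctan_half_pos pi_quarter_less_two_arctan_half
    by (auto intro!: admissible_point_one_one admissible_point_one_two admissible_point_two_one
        admissible_point_grid admissible_point_grid_reflected)
  then show ?thesis
    by (simp add: admissible_point_def)
qed

end
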